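(* For every integer $k \geq 1$, let $\mathcal{b}(k)$ denote the greatest common divisor of all the sums $\sum_{i=1}^{k} b_{n+i}$, $n \geq 0$. Then $$\mathcal{b}(k) = \begin{cases} \gcd(P_k, k), & \text{if } k \text{ is even};\\ 2\gcd(Q_k, k), & \text{if } k \text{ is odd}.\end{cases}$$
   Context: The Pell sequence $(P_n)_{n\ge0}$ is defined by $P_0=0$, $P_1=1$, $P_n = 2P_{n-1}+P_{n-2}$. The associated Pell sequence $(Q_n)_{n\ge0}$ is defined by $Q_0=1$, $Q_1=1$, $Q_n=2Q_{n-1}+Q_{n-2}$. The cobalancing sequence $(b_n)_{n\ge0}$ is defined by $b_0=0$, $b_1=0$, $b_n=6b_{n-1}-b_{n-2}+2$. *)

theory Defs
  imports Main
begin

fun pell :: "nat \<Rightarrow> nat" where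
  "pell 0 = 0"
| "pell (Suc 0) = 1"
| "pell (Suc (Suc n)) = 2 * pell (Suc n) + pell n"

fun assoc_pell :: "nat \<Rightarrow> nat" where
  "assoc_pell 0 = 1"
| "assoc_pell (Suc 0) = 1"
| "assoc_pell (Suc (Suc n)) = 2 * assoc_pell (Suc n) + assoc_pell n"

fun cobal :: "nat \<Rightarrow> int" where
  "cobal 0 = 0"
| "cobal (Suc 0) = 0"
| "cobal (Suc (Suc n)) = 6 * cobal (Suc n) - cobal n + 2"

definition cobal_gcd :: "nat \<Rightarrow> int" where
  "cobal_gcd k = Gcd {(\<Sum>i=1..k. cobal (n + i)) | n. True}"

end

theory Submission
  imports Defs
begin

(* The window sums s_n = b_{n+1} + ... + b_{n+k} satisfy s_{n+2} = 6 s_{n+1} - s_n + 2k, so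
   their gcd is gcd (s_0, b_{k+1}, 2k).  With x = P_k and y = Q_k one has 2 s_0 = x y - k,
   2 b_{k+1} + 1 = P_{2k+1} = 2x^2 + 2xy + y^2 and y^2 - 2x^2 = (-1)^k.  The gcd is then pinned
   down by explicit linear combinations; for even k the remaining factor 2 is controlled by
   P_k and k having the same 2-adic valuation. *)

lemma Gcd_range_linear_recurrence:
  fixes s :: "nat \<Rightarrow> int"
  assumes rec: "\<And>n. s (n + 2) = c * s (n + 1) + d * s n + e"
  shows "Gcd (range s) = gcd (s 0) (gcd (s 1) e)"
proof (rule Gcd_eqI)
  define g where "g = gcd (s 0) (gcd (s 1) e)"
  have g_dvd: "g dvd s 0" "g dvd s 1" "g dvd e"
    unfolding g_def by (meson dvd_trans gcd_dvd1 gcd_dvd2)+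
  have "g dvd s n \<and> g dvd s (n + 1)" for n
  proof (induction n)
    case (Suc n)
    have "g dvd c * s (n + 1) + d * s n + e"
      using Suc g_dvd by (simp add: dvd_add dvd_mult)
    then show ?case
      using Suc rec[of n] by simp
  qed (use g_dvd in simp)
  then show "\<And>b. b \<in> range s \<Longrightarrow> g dvd b"
    by blast
next
  fix g assume "\<And>b. b \<in> range s \<Longrightarrow> g dvd b"
  then have "g dvd s 0" "g dvd s 1" "g dvd s 2"
    by auto
  moreover have "e = s 2 - c * s 1 - d * s 0"
    using rec[of 0] by (simp add: numeral_2_eq_2)
  ultimately show "g dvd gcd (s 0) (gcd (s 1) e)"
    by simp
qed simp

lemma sum_window_linear_recurrence:
  fixes f :: "nat \<Rightarrow> 'a :: comm_semiring_1"
  assumes rec: "\<And>n. f (n + 2) = c * f (n + 1) + d * f n + e"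
  shows "(\<Sum>i=1..k. f (n + 2 + i)) =
           c * (\<Sum>i=1..k. f (n + 1 + i)) + d * (\<Sum>i=1..k. f (n + i)) + of_nat k * e"
proof -
  have "(\<Sum>i=1..k. f (n + 2 + i)) = (\<Sum>i=1..k. c * f (n + 1 + i) + d * f (n + i) + e)"
    using rec[of "n + _"] by (simp add: ac_simps)
  then show ?thesis
    by (simp add: sum.distrib sum_distrib_left)
qed

lemma sum_atLeastAtMost_Suc_shift:
  fixes f :: "nat \<Rightarrow> 'a :: ab_group_add"
  shows "(\<Sum>i=1..k. f (Suc i)) = (\<Sum>i=1..k. f i) + f (k + 1) - f 1"
  by (induction k) simp_all

lemma gcd_dvd_of_pell_equation_plus_one:
  fixes x y k A B :: int
  assumes pell_eq: "y^2 = 2 * x^2 + 1" and A: "2 * A = x * y - k" and B: "B = x * (2 * x + y)"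
  shows "gcd A (gcd B (2 * k)) dvd gcd x k"
proof -
  define g where "g = gcd A (gcd B (2 * k))"
  have g: "g dvd A" "g dvd B" "g dvd 2 * k"
    unfolding g_def by (meson dvd_trans gcd_dvd1 gcd_dvd2)+
  have "g dvd x * y - k"
    using g(1) A by (metis dvd_mult)
  from pell_eq have "odd (y^2)"
    by simp
  then obtain t where y: "y = 2 * t + 1"
    by (auto elim: oddE)
  have "k * y = y * B - (2 * x + y) * (x * y - k) - x * (2 * k)"
    by (simp add: B algebra_simps)
  then have "g dvd k * y"
    using g \<open>g dvd x * y - k\<close> by simp
  moreover have "k = k * y - t * (2 * k)"
    using y by (simp add: algebra_simps)
  ultimately have "g dvd k"
    using g by (metis dvd_diff dvd_mult)
  with \<open>g dvd x * y - k\<close> have "g dvd x * y"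
    by (metis diff_add_cancel dvd_add)
  moreover have "x = y * (x * y) - x * (B - x * y)"
    using pell_eq B by (simp add: power2_eq_square algebra_simps)
  ultimately have "g dvd x"
    using g by (metis dvd_diff dvd_mult)
  with \<open>g dvd k\<close> show ?thesis
    by (simp add: g_def)
qed

lemma gcd_dvd_half_of_equal_two_adic:
  fixes x y k A u w :: int
  assumes A: "2 * A = x * y - k" and x: "x = 2^a * u" and k: "k = 2^a * w"
    and "odd u" "odd w" "odd y"
  shows "gcd x k dvd A"
proof -
  define e where "e = gcd u w"
  have "odd e"
    unfolding e_def using \<open>odd u\<close> by (meson dvd_trans gcd_dvd1)
  moreover have "e dvd u * y - w" and "even (u * y - w)"
    using \<open>odd u\<close> \<open>odd w\<close> \<open>odd y\<close> by (simp_all add: e_def)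
  ultimately have "2 * e dvd u * y - w"
    by (simp add: divides_mult)
  then obtain r where r: "u * y - w = 2 * e * r"
    by (rule dvdE)
  have "2 * A = 2^a * (u * y - w)"
    using A x k by (simp add: algebra_simps)
  also have "\<dots> = 2 * (2^a * e * r)"
    using r by simp
  finally have "A = 2^a * e * r"
    by simp
  moreover have "gcd x k = 2^a * e"
    using x k by (simp add: e_def gcd_mult_distrib_int[symmetric])
  ultimately show ?thesis
    by simp
qed

lemma gcd_of_pell_equation_plus_one:
  fixes x y k A B u w :: int
  assumes pell_eq: "y^2 = 2 * x^2 + 1" and A: "2 * A = x * y - k" and B: "B = x * (2 * x + y)"
    and "x = 2^a * u" "k = 2^a * w" "odd u" "odd w"
  shows "gcd A (gcd B (2 * k)) = gcd x k"
proof (rule zdvd_antisym_nonneg)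
  show "gcd A (gcd B (2 * k)) dvd gcd x k"
    using pell_eq A B by (rule gcd_dvd_of_pell_equation_plus_one)
  from pell_eq have "odd (y^2)"
    by simp
  then have "gcd x k dvd A"
    using gcd_dvd_half_of_equal_two_adic[OF A] assms(4-7) by simp
  then show "gcd x k dvd gcd A (gcd B (2 * k))"
    using B by simp
qed simp_all

lemma gcd_of_pell_equation_minus_one:
  fixes x y k A B :: int
  assumes pell_eq: "y^2 = 2 * x^2 - 1" and A: "2 * A = x * y - k" and B: "B = y * (y + x)"
    and "even A" "even B"
  shows "gcd A (gcd B (2 * k)) = 2 * gcd y k"
proof (rule zdvd_antisym_nonneg)
  define g where "g = gcd A (gcd B (2 * k))"
  have g: "g dvd A" "g dvd B" "g dvd 2 * k"
    unfolding g_def by (meson dvd_trans gcd_dvd1 gcd_dvd2)+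
  have "2 * (x * y) = 2 * (2 * A) + 2 * k"
    using A by simp
  then have "g dvd 2 * (x * y)"
    using g by simp
  have "2 * y = 2 * y * (2 * x^2 - y^2)"
    using pell_eq by simp
  also have "\<dots> = 2 * x * (2 * (x * y)) - y * (2 * B - 2 * (x * y))"
    by (simp add: B power2_eq_square algebra_simps)
  finally have "g dvd 2 * y"
    using g \<open>g dvd 2 * (x * y)\<close> by (metis dvd_diff dvd_mult)
  then have "g dvd gcd (2 * y) (2 * k)"
    using g by simp
  then show "g dvd 2 * gcd y k"
    by (simp add: gcd_mult_left)
next
  define e where "e = gcd y k"
  from pell_eq have "odd (y^2)"
    by simp
  then have "odd y"
    by simp
  then have "coprime 2 e"
    unfolding e_def by (meson dvd_trans gcd_dvd1 coprime_left_2_iff_odd)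
  moreover have "e dvd 2 * A"
    using A by (simp add: e_def)
  ultimately have "2 * e dvd A"
    using \<open>even A\<close> by (simp add: divides_mult coprime_dvd_mult_right_iff coprime_commute)
  moreover have "2 * e dvd B"
    using B \<open>even B\<close> \<open>coprime 2 e\<close> by (simp add: e_def divides_mult)
  ultimately show "2 * gcd y k dvd gcd A (gcd B (2 * k))"
    by (simp add: e_def)
qed simp_all

lemma pell_Suc_eq: "pell (Suc n) = pell n + assoc_pell n"
  by (induction n rule: pell.induct) auto

lemma assoc_pell_Suc_eq: "assoc_pell (Suc n) = assoc_pell n + 2 * pell n"
  by (induction n rule: pell.induct) auto

lemma assoc_pell_pell_equation: "int (assoc_pell n)^2 - 2 * int (pell n)^2 = (-1)^n"
  by (induction n) (simp_all add: pell_Suc_eq assoc_pell_Suc_eq power2_eq_square algebra_simps)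

lemma odd_assoc_pell: "odd (assoc_pell n)"
  by (induction n rule: assoc_pell.induct) auto

lemma even_pell_iff: "even (pell n) \<longleftrightarrow> even n"
  by (induction n) (simp_all add: pell_Suc_eq odd_assoc_pell)

lemma pell_add: "pell (m + n + 1) = pell (m + 1) * pell (n + 1) + pell m * pell n"
proof (induction m arbitrary: n)
  case (Suc m)
  have "pell (Suc m + n + 1) = pell (m + 1) * pell (n + 2) + pell m * pell (n + 1)"
    using Suc[of "n + 1"] by simp
  also have "\<dots> = pell (m + 2) * pell (n + 1) + pell (m + 1) * pell n"
    by (simp add: numeral_2_eq_2 algebra_simps)
  finally show ?case
    by simp
qed simp

lemma pell_double: "pell (2 * n) = 2 * pell n * assoc_pell n"
proof (cases n)
  case (Suc m)
  have "2 * n = Suc m + m + 1"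
    using Suc by simp
  then have "pell (2 * n) = pell (Suc m) * (pell (Suc (Suc m)) + pell m)"
    by (simp only: pell_add) (simp add: algebra_simps)
  also have "pell (Suc (Suc m)) + pell m = 2 * assoc_pell (Suc m)"
    by (simp add: pell_Suc_eq assoc_pell_Suc_eq)
  finally show ?thesis
    using Suc by simp
qed simp

lemma pell_Suc_double: "pell (2 * n + 1) = pell (n + 1)^2 + pell n^2"
  using pell_add[of n n] by (simp add: power2_eq_square mult_2)

lemma pell_add_four: "pell (n + 4) + pell n = 6 * pell (n + 2)"
  by (simp add: numeral_eq_Suc)

lemma two_adic_pell:
  assumes "n \<ge> 1"
  shows "\<exists>a u w. odd u \<and> odd w \<and> pell n = 2^a * u \<and> n = 2^a * w"
  using assms
proof (induction n rule: less_induct)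
  case (less n)
  show ?case
  proof (cases "even n")
    case False
    then show ?thesis
      using even_pell_iff[of n] by (metis power_0 mult_1)
  next
    case True
    then obtain m where n: "n = 2 * m"
      by blast
    with less.prems obtain a u w where "odd u" "odd w" "pell m = 2^a * u" "m = 2^a * w"
      using less.IH[of m] by auto
    then have "odd (u * assoc_pell m)" "pell n = 2^(a+1) * (u * assoc_pell m)" "n = 2^(a+1) * w"
      using n pell_double[of m] odd_assoc_pell[of m] by simp_all
    with \<open>odd w\<close> show ?thesis
      by blast
  qed
qed

lemma cobal_even: "even (cobal n)"
  by (induction n rule: cobal.induct) auto

lemma cobal_Suc_pell: "2 * cobal (Suc n) + 1 = int (pell (2 * n + 1))"
proof (induction n rule: induct_nat_012)
  case (ge2 n)
  have "2 * Suc (Suc n) + 1 = (2 * n + 1) + 4" "2 * Suc n + 1 = (2 * n + 1) + 2"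
    by simp_all
  then show ?case
    using ge2 pell_add_four[of "2 * n + 1"] by simp
qed (simp_all add: numeral_eq_Suc)

lemma cobal_sum_pell: "4 * (\<Sum>i=1..k. cobal i) + 2 * int k = int (pell (2 * k))"
proof (induction k)
  case (Suc k)
  have "pell (2 * Suc k) = 2 * pell (2 * k + 1) + pell (2 * k)"
    by (simp add: numeral_eq_Suc)
  then show ?case
    using Suc cobal_Suc_pell[of k] by simp
qed simp

lemma cobal_gcd_eq:
  "cobal_gcd k = gcd (\<Sum>i=1..k. cobal i) (gcd (cobal (k + 1)) (2 * int k))"
proof -
  define s where "s n = (\<Sum>i=1..k. cobal (n + i))" for n
  have "cobal (n + 2) = 6 * cobal (n + 1) + (- 1) * cobal n + 2" for n
    by (simp add: numeral_2_eq_2)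
  from sum_window_linear_recurrence[OF this]
  have "s (n + 2) = 6 * s (n + 1) + (- 1) * s n + 2 * int k" for n
    unfolding s_def by (simp add: mult.commute)
  then have "Gcd (range s) = gcd (s 0) (gcd (s 1) (2 * int k))"
    by (rule Gcd_range_linear_recurrence)
  moreover have "s 1 = (\<Sum>i=1..k. cobal i) + cobal (k + 1)"
    using sum_atLeastAtMost_Suc_shift[of cobal k] by (simp add: s_def)
  moreover have "cobal_gcd k = Gcd (range s)"
    by (simp add: cobal_gcd_def s_def full_SetCompr_eq)
  ultimately show ?thesis
    by (simp add: s_def gcd.assoc[symmetric])
qed

lemma two_cobal_sum_eq:
  "2 * (\<Sum>i=1..k. cobal i) = int (pell k) * int (assoc_pell k) - int k"
  using cobal_sum_pell[of k] pell_double[of k] by simp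

lemma two_cobal_Suc_eq:
  "2 * cobal (k + 1) + 1 =
     2 * int (pell k)^2 + 2 * int (pell k) * int (assoc_pell k) + int (assoc_pell k)^2"
  using cobal_Suc_pell[of k] pell_Suc_double[of k] pell_Suc_eq[of k]
  by (simp add: power2_eq_square algebra_simps)

lemma cobal_gcd_even:
  assumes "even k" and "k \<ge> 1"
  shows "cobal_gcd k = int (gcd (pell k) k)"
proof -
  define x y where "x = int (pell k)" and "y = int (assoc_pell k)"
  obtain a u w where "odd u" "odd w" "pell k = 2^a * u" "k = 2^a * w"
    using two_adic_pell[OF \<open>k \<ge> 1\<close>] by blast
  then have two_adic: "x = 2^a * int u" "int k = 2^a * int w" "odd (int u)" "odd (int w)"
    by (simp_all add: x_def)
  have pell_eq: "y^2 = 2 * x^2 + 1"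
    using assoc_pell_pell_equation[of k] \<open>even k\<close> by (simp add: x_def y_def)
  have "2 * (\<Sum>i=1..k. cobal i) = x * y - int k"
    using two_cobal_sum_eq[of k] by (simp add: x_def y_def)
  moreover have "cobal (k + 1) = x * (2 * x + y)"
    using two_cobal_Suc_eq[of k] pell_eq by (simp add: x_def y_def power2_eq_square algebra_simps)
  ultimately have "gcd (\<Sum>i=1..k. cobal i) (gcd (cobal (k + 1)) (2 * int k)) = gcd x (int k)"
    using gcd_of_pell_equation_plus_one[OF pell_eq _ _ two_adic] by blast
  then show ?thesis
    by (simp add: cobal_gcd_eq x_def)
qed

lemma cobal_gcd_odd:
  assumes "odd k"
  shows "cobal_gcd k = 2 * int (gcd (assoc_pell k) k)"
proof -
  define x y where "x = int (pell k)" and "y = int (assoc_pell k)"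
  have pell_eq: "y^2 = 2 * x^2 - 1"
    using assoc_pell_pell_equation[of k] \<open>odd k\<close> by (simp add: x_def y_def)
  have "2 * (\<Sum>i=1..k. cobal i) = x * y - int k"
    using two_cobal_sum_eq[of k] by (simp add: x_def y_def)
  moreover have "cobal (k + 1) = y * (y + x)"
    using two_cobal_Suc_eq[of k] pell_eq by (simp add: x_def y_def power2_eq_square algebra_simps)
  moreover have "even (\<Sum>i=1..k. cobal i)" and "even (cobal (k + 1))"
    using cobal_even by (auto intro: dvd_sum)
  ultimately have "gcd (\<Sum>i=1..k. cobal i) (gcd (cobal (k + 1)) (2 * int k)) = 2 * gcd y (int k)"
    using gcd_of_pell_equation_minus_one[OF pell_eq] by blast
  then show ?thesis
    by (simp add: cobal_gcd_eq y_def)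
qed

theorem theorem28:
  fixes k :: nat
  assumes "k \<ge> 1"
  shows "cobal_gcd k = (if even k then int (gcd (pell k) k)
                        else 2 * int (gcd (assoc_pell k) k))"
  using cobal_gcd_even[OF _ assms] cobal_gcd_odd by simp

end
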